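(* For all even $n\ge2$ and even $q\ge2$, $$A_{BMU}(n,q)\le\frac{\binom{n}{n/2}\left(\frac q2\right)^n}{n}.$$ In particular (as $\binom{n}{n/2}\approx 2^{n+1}/\sqrt{2\pi n}$), the redundancy of balanced MU codes is at least $1.5\log_q n+O(1)$.
   Context: $\Sigma_q=\{0,\dots,q-1\}$ with $q$ even, $n$ even. A word $\vec a\in\Sigma_q^n$ is balanced if the number of positions $i$ with $a_i\in[0,q/2-1]$ equals $n/2$ (for $q=2$: Hamming weight $n/2$). A code $\mathcal C\subseteq\Sigma_q^n$ is mutually uncorrelated (MU) if for any two not necessarily distinct codewords $\vec a,\vec b$, no proper nonempty prefix of $\vec a$ equals a suffix of $\vec b$ of the same length. A balanced MU code is an MU code all of whose codewords are balanced; $A_{BMU}(n,q)$ is the largest size of a balanced MU code in $\Sigma_q^n$. Redundancy of $A\subseteq\Sigma_q^n$ is $n-\log_q|A|$. *)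

theory Defs
  imports Complex_Main
begin

definition words :: "nat \<Rightarrow> nat \<Rightarrow> nat list set" where
  "words n q = {a. length a = n \<and> set a \<subseteq> {0..<q}}"

definition balanced :: "nat \<Rightarrow> nat \<Rightarrow> nat list \<Rightarrow> bool" where
  "balanced n q a \<longleftrightarrow> card {i. i < length a \<and> a ! i < q div 2} = n div 2"

definition mutually_uncorrelated :: "nat list set \<Rightarrow> bool" where
  "mutually_uncorrelated C \<longleftrightarrow>
     (\<forall>a\<in>C. \<forall>b\<in>C. \<forall>k. 0 < k \<and> k < length a \<longrightarrow>
        take k a \<noteq> drop (length b - k) b)"

definition balanced_MU_code :: "nat \<Rightarrow> nat \<Rightarrow> nat list set \<Rightarrow> bool" where
  "balanced_MU_code n q C \<longleftrightarrow>
     C \<subseteq> words n q \<and> mutually_uncorrelated C \<and> (\<forall>a\<in>C. balanced n q a)"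

definition A_BMU :: "nat \<Rightarrow> nat \<Rightarrow> nat" where
  "A_BMU n q = Max {card C | C. balanced_MU_code n q C}"

end

theory Submission
  imports Defs
begin

text \<open>The n cyclic shifts of the codewords of a balanced MU code C of length n are
  n * card C balanced words, and they are pairwise distinct: if two shifts coincide, one
  codeword is a nontrivial rotation of another, so a proper prefix of the first is a suffix
  of the second. On the other hand a balanced word is determined by the n/2 positions
  carrying a letter below q/2 together with its letters reduced modulo q/2, so there are at
  most (n choose n/2) * (q/2)^n balanced words.\<close>

lemma finite_words: "finite (words n q)"
proof -
  have "words n q = {xs. set xs \<subseteq> {0..<q} \<and> length xs = n}" by (auto simp: words_def)
  then show ?thesis using finite_lists_length_eq[of "{0..<q}" n] by simp
qed

lemma length_filter_rotate: "length (filter P (rotate k xs)) = length (filter P xs)"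
  by (simp add: rotate_drop_take)
     (metis append_take_drop_id filter_append length_append add.commute)

lemma balanced_iff_length_filter:
  "balanced n q a \<longleftrightarrow> length (filter (\<lambda>x. x < q div 2) a) = n div 2"
  unfolding balanced_def by (simp add: length_filter_conv_card)

lemma balanced_rotate: "balanced n q (rotate k a) \<longleftrightarrow> balanced n q a"
  by (simp add: balanced_iff_length_filter length_filter_rotate)

lemma rotate_in_words: "rotate k a \<in> words n q \<longleftrightarrow> a \<in> words n q"
  by (simp add: words_def)

lemma rotate_eq_rotateD:
  assumes "length xs = length ys" "k \<le> j" "j < length ys" "rotate k xs = rotate j ys"
  shows "xs = rotate (j - k) ys"
proof -
  let ?n = "length ys"
  have "xs = rotate (?n - k) (rotate k xs)"
    using assms(1-3) by (simp add: rotate_rotate)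
  also have "\<dots> = rotate ((j - k) + ?n) ys"
    using assms(2-4) by (simp add: rotate_rotate add.commute)
  also have "\<dots> = rotate (j - k) ys"
    by (metis mod_add_self2 rotate_conv_mod)
  finally show ?thesis .
qed

lemma mutually_uncorrelated_not_rotation:
  assumes "mutually_uncorrelated C" "a \<in> C" "b \<in> C" "length a = length b"
    and "0 < d" "d < length b"
  shows "a \<noteq> rotate d b"
proof
  assume "a = rotate d b"
  then have "a = drop d b @ take d b"
    using assms by (simp add: rotate_drop_take)
  then have "take (length b - d) a = drop (length b - (length b - d)) b"
    using assms by simp
  moreover have "0 < length b - d" "length b - d < length a"
    using assms by auto
  ultimately show False
    using assms(1-3) unfolding mutually_uncorrelated_def by blast
qed

lemma inj_on_rotations:
  assumes "mutually_uncorrelated C" "\<And>a. a \<in> C \<Longrightarrow> length a = n"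
  shows "inj_on (\<lambda>(a, k). rotate k a) (C \<times> {..<n})"
proof -
  have shift_eq: "k = j" if "a \<in> C" "b \<in> C" "k \<le> j" "j < n" "rotate k a = rotate j b"
    for a b k j
    using rotate_eq_rotateD[of a b k j] mutually_uncorrelated_not_rotation[of C a b "j - k"]
      assms that by force
  show ?thesis
  proof (rule inj_onI, clarify)
    fix a k b j assume ab: "a \<in> C" "b \<in> C" and kj: "k < n" "j < n"
      and eq: "rotate k a = rotate j b"
    have "k = j"
      using shift_eq[OF ab _ kj(2) eq] shift_eq[OF ab(2,1) _ kj(1) eq[symmetric]] by linarith
    with eq ab assms(2) show "a = b \<and> k = j"
      using rotate_eq_rotateD[of a b k k] kj by simp
  qed
qed

lemma eq_if_same_half_and_mod:
  fixes x y h :: nat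
  assumes "x < 2 * h" "y < 2 * h" "x < h \<longleftrightarrow> y < h" "x mod h = y mod h"
  shows "x = y"
proof (cases "x < h")
  case True
  then show ?thesis using assms by simp
next
  case False
  then have "x mod h = x - h" "y mod h = y - h"
    using assms by (simp_all add: le_mod_geq)
  then show ?thesis using assms False by simp
qed

lemma inj_on_low_positions_residues:
  fixes h :: nat
  shows "inj_on (\<lambda>a. ({i. i < length a \<and> a ! i < h}, map (\<lambda>x. x mod h) a))
           {a. set a \<subseteq> {..<2 * h}}"
proof (rule inj_onI, clarsimp)
  fix a b :: "nat list"
  assume a: "set a \<subseteq> {..<2 * h}" and b: "set b \<subseteq> {..<2 * h}"
    and low: "{i. i < length a \<and> a ! i < h} = {i. i < length b \<and> b ! i < h}"
    and res: "map (\<lambda>x. x mod h) a = map (\<lambda>x. x mod h) b"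
  have len: "length a = length b"
    using res by (metis length_map)
  show "a = b"
  proof (rule nth_equalityI[OF len])
    fix i assume i: "i < length a"
    have "a ! i < 2 * h" "b ! i < 2 * h"
      using subsetD[OF a nth_mem[OF i]] subsetD[OF b nth_mem[of i b]] i len by simp_all
    moreover have "a ! i < h \<longleftrightarrow> b ! i < h"
      using low i len by (simp add: set_eq_iff) (metis len)
    moreover have "a ! i mod h = b ! i mod h"
      using res i len by (metis nth_map)
    ultimately show "a ! i = b ! i"
      using eq_if_same_half_and_mod by blast
  qed
qed

lemma card_balanced_words_le:
  assumes "even q"
  shows "card {a \<in> words n q. balanced n q a} \<le> (n choose (n div 2)) * (q div 2) ^ n"
proof -
  define h where "h = q div 2"
  let ?enc = "\<lambda>a. ({i. i < length a \<and> a ! i < h}, map (\<lambda>x. x mod h) a)"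
  let ?B = "{a \<in> words n q. balanced n q a}"
  let ?S = "{S. S \<subseteq> {..<n} \<and> card S = n div 2}"
  let ?L = "{xs. set xs \<subseteq> {..<h} \<and> length xs = n}"
  have q: "q = 2 * h"
    using assms by (simp add: h_def)
  have "inj_on ?enc ?B"
    using inj_on_low_positions_residues[of h]
    by (rule inj_on_subset) (auto simp: words_def q)
  moreover have "?enc ` ?B \<subseteq> ?S \<times> ?L"
  proof (rule image_subsetI)
    fix a assume a: "a \<in> ?B"
    have "x mod h < h" if "x \<in> set a" for x
      using a that by (auto simp: words_def q)
    then show "?enc a \<in> ?S \<times> ?L"
      using a by (auto simp: words_def balanced_def h_def)
  qed
  moreover have "finite (?S \<times> ?L)"
    by (simp add: finite_lists_length_eq)
  ultimately have "card ?B \<le> card (?S \<times> ?L)"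
    using card_inj_on_le by blast
  also have "\<dots> = (n choose (n div 2)) * h ^ n"
    by (simp add: card_cartesian_product n_subsets card_lists_length_eq)
  finally show ?thesis
    by (simp add: h_def)
qed

lemma card_balanced_MU_code_mult_le:
  assumes "balanced_MU_code n q C"
  shows "n * card C \<le> card {a \<in> words n q. balanced n q a}"
proof -
  let ?rot = "\<lambda>(a, k). rotate k a"
  have len: "\<And>a. a \<in> C \<Longrightarrow> length a = n"
    using assms by (auto simp: balanced_MU_code_def words_def)
  have "inj_on ?rot (C \<times> {..<n})"
    using assms len by (intro inj_on_rotations) (auto simp: balanced_MU_code_def)
  moreover have "?rot ` (C \<times> {..<n}) \<subseteq> {a \<in> words n q. balanced n q a}"
    using assms by (auto simp: balanced_MU_code_def rotate_in_words balanced_rotate)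
  moreover have "finite {a \<in> words n q. balanced n q a}"
    using finite_words by simp
  ultimately have "card (C \<times> {..<n}) \<le> card {a \<in> words n q. balanced n q a}"
    by (rule card_inj_on_le)
  then show ?thesis
    by (simp add: card_cartesian_product mult.commute)
qed

lemma A_BMU_attained: "\<exists>C. balanced_MU_code n q C \<and> A_BMU n q = card C"
proof -
  let ?sizes = "{card C | C. balanced_MU_code n q C}"
  have "?sizes \<subseteq> card ` Pow (words n q)"
    by (auto simp: balanced_MU_code_def)
  then have "finite ?sizes"
    using finite_words by (simp add: finite_subset)
  moreover have "balanced_MU_code n q {}"
    by (simp add: balanced_MU_code_def mutually_uncorrelated_def)
  ultimately have "A_BMU n q \<in> ?sizes"
    unfolding A_BMU_def by (intro Max_in) auto
  then show ?thesis
    by auto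
qed

theorem theorem7:
  fixes n q :: nat
  assumes "even n" "n \<ge> 2" "even q" "q \<ge> 2"
  shows "real (A_BMU n q) \<le> real (n choose (n div 2)) * (real q / 2) ^ n / real n"
proof -
  obtain C where C: "balanced_MU_code n q C" and A: "A_BMU n q = card C"
    using A_BMU_attained by blast
  have "n * A_BMU n q \<le> (n choose (n div 2)) * (q div 2) ^ n"
    using order_trans[OF card_balanced_MU_code_mult_le[OF C] card_balanced_words_le[OF assms(3)]] A
    by simp
  then have "real n * real (A_BMU n q) \<le> real (n choose (n div 2)) * real (q div 2) ^ n"
    by (metis of_nat_le_iff of_nat_mult of_nat_power)
  moreover have "real (q div 2) = real q / 2"
    using assms(3) by (auto elim: evenE)
  moreover have "real n > 0"
    using assms(2) by simp
  ultimately show ?thesis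
    by (simp add: field_simps)
qed

end
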